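(* If $\gamma=0$, then for $u_1,\dots,u_n\in\mathcal B$, $R_n[X(u_1),\dots,X(u_n)]=\langle a^-(u_1)a^0(u_2)\cdots a^0(u_{n-1})a^+(u_n)\Omega,\Omega\rangle_{\gamma,\phi}$.
   Context: Let $\mathcal B$ be a unital $*$-algebra with star-linear maps $\phi:\mathcal B\to\mathbb C$, $\gamma:\mathcal B\to\mathcal B$, $\Lambda:\mathcal B\otimes_{alg}\mathcal B\to\mathcal B$, where $\phi$ is positive and faithful and $\gamma+\phi$ is completely positive, with $(\gamma+\phi)[b]:=\gamma[b]+\phi[b]1_{\mathcal B}$. Assume $\phi[v^*\Lambda(b\otimes u)]=\phi[\Lambda(b^*\otimes v)^*u]$ and $\gamma[v^*\Lambda(b\otimes u)]=\gamma[\Lambda(b^*\otimes v)^*u]$ for all $b,u,v$. On $\mathcal F_{alg}(\mathcal B)=\mathbb C\Omega\oplus\bigoplus_{n\ge1}\mathcal B^{\otimes n}$ use the form $\langle\Omega,\Omega\rangle_{\gamma,\phi}=1$, $\langle u_1\otimes\cdots\otimes u_n,v_1\otimes\cdots\otimes v_k\rangle_{\gamma,\phi}=\delta_{n=k}\phi[v_n^*(\gamma+\phi)[v_{n-1}^*\cdots(\gamma+\phi)[v_1^*u_1]\cdots u_{n-1}]u_n]$. For $b\in\mathcal B$: $a^+(b)\Omega=b$, $a^+(b)(u_1\otimes\cdots\otimes u_n)=b\otimes u_1\otimes\cdots\otimes u_n$; $a^-(b)\Omega=0$, $a^-(b)u_1=\phi[bu_1]\Omega$, $a^-(b)(u_1\otimes\cdots\otimes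 u_n)=(\gamma+\phi)[bu_1]u_2\otimes\cdots\otimes u_n$ ($n\ge2$); $a^0(b)\Omega=0$, $a^0(b)(u_1\otimes\cdots\otimes u_n)=\Lambda(b\otimes u_1)\otimes u_2\otimes\cdots\otimes u_n$; $X(b)=a^+(b)+a^-(b)+a^0(b)$. Free cumulants $R_k$ with respect to $\psi(A)=\langle A\Omega,\Omega\rangle_{\gamma,\phi}$ are defined by $\psi[Y_1\cdots Y_n]=\sum_{\pi\in\mathrm{NC}(n)}\prod_{V\in\pi}R_{|V|}[Y_{V(1)},\dots,Y_{V(|V|)}]$, $\mathrm{NC}(n)$ the noncrossing partitions of $\{1,\dots,n\}$. *)

theory Defs
  imports Complex_Main "HOL-Library.Disjoint_Sets" "HOL-Library.Complex_Order"
begin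

class unital_star_algebra = ring_1 +
  fixes scaleC :: "complex \<Rightarrow> 'a \<Rightarrow> 'a"
    and adj :: "'a \<Rightarrow> 'a"
  assumes scaleC_add_right: "scaleC c (x + y) = scaleC c x + scaleC c y"
    and scaleC_add_left: "scaleC (c + d) x = scaleC c x + scaleC d x"
    and scaleC_scaleC: "scaleC c (scaleC d x) = scaleC (c * d) x"
    and scaleC_one: "scaleC 1 x = x"
    and scaleC_left_mult: "scaleC c x * y = scaleC c (x * y)"
    and scaleC_right_mult: "x * scaleC c y = scaleC c (x * y)"
    and adj_adj: "adj (adj x) = x"
    and adj_add: "adj (x + y) = adj x + adj y"
    and adj_mult: "adj (x * y) = adj y * adj x"
    and adj_scaleC: "adj (scaleC c x) = scaleC (cnj c) (adj x)"

definition lin_functional :: "('b::unital_star_algebra \<Rightarrow> complex) \<Rightarrow> bool" where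
  "lin_functional f \<longleftrightarrow> (\<forall>x y. f (x + y) = f x + f y) \<and> (\<forall>c x. f (scaleC c x) = c * f x)"

definition lin_map :: "('b::unital_star_algebra \<Rightarrow> 'b) \<Rightarrow> bool" where
  "lin_map f \<longleftrightarrow> (\<forall>x y. f (x + y) = f x + f y) \<and> (\<forall>c x. f (scaleC c x) = scaleC c (f x))"

text \<open>A linear map on the algebraic tensor product B (x) B is the same as a bilinear map.\<close>
definition bilin_map :: "('b::unital_star_algebra \<Rightarrow> 'b \<Rightarrow> 'b) \<Rightarrow> bool" where
  "bilin_map L \<longleftrightarrow> (\<forall>y. lin_map (\<lambda>x. L x y)) \<and> (\<forall>x. lin_map (\<lambda>y. L x y))"

definition star_lin_functional :: "('b::unital_star_algebra \<Rightarrow> complex) \<Rightarrow> bool" where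
  "star_lin_functional f \<longleftrightarrow> lin_functional f \<and> (\<forall>x. f (adj x) = cnj (f x))"

definition star_lin_map :: "('b::unital_star_algebra \<Rightarrow> 'b) \<Rightarrow> bool" where
  "star_lin_map f \<longleftrightarrow> lin_map f \<and> (\<forall>x. f (adj x) = adj (f x))"

text \<open>Star on B (x) B is (b (x) c)* = b* (x) c*.\<close>
definition star_bilin_map :: "('b::unital_star_algebra \<Rightarrow> 'b \<Rightarrow> 'b) \<Rightarrow> bool" where
  "star_bilin_map L \<longleftrightarrow> bilin_map L \<and> (\<forall>x y. L (adj x) (adj y) = adj (L x y))"

definition positive_functional :: "('b::unital_star_algebra \<Rightarrow> complex) \<Rightarrow> bool" where
  "positive_functional f \<longleftrightarrow> (\<forall>b. 0 \<le> f (adj b * b))"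

definition faithful_functional :: "('b::unital_star_algebra \<Rightarrow> complex) \<Rightarrow> bool" where
  "faithful_functional f \<longleftrightarrow> (\<forall>b. f (adj b * b) = 0 \<longrightarrow> b = 0)"

text \<open>Complete positivity: for all n and b_1..b_n the matrix [T(b_i* b_j)] in M_n(B)
  is a finite sum of elements A*A, A in M_n(B) (algebraic positivity).\<close>
definition completely_positive :: "('b::unital_star_algebra \<Rightarrow> 'b) \<Rightarrow> bool" where
  "completely_positive T \<longleftrightarrow>
     (\<forall>(n::nat) (b::nat \<Rightarrow> 'b). \<exists>(m::nat) (A::nat \<Rightarrow> nat \<Rightarrow> nat \<Rightarrow> 'b).
        \<forall>i<n. \<forall>j<n. T (adj (b i) * b j) = (\<Sum>l<m. \<Sum>k<n. adj (A l k i) * A l k j))"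

definition gp :: "('b::unital_star_algebra \<Rightarrow> 'b) \<Rightarrow> ('b \<Rightarrow> complex) \<Rightarrow> 'b \<Rightarrow> 'b" where
  "gp \<gamma> \<phi> b = \<gamma> b + scaleC (\<phi> b) 1"

text \<open>Elements of F_alg(B) are represented as formal finite linear combinations of
  words: the empty word is Omega, the word [u1,...,un] is u1 (x) ... (x) un.\<close>
type_synonym 'b fvec = "(complex \<times> 'b list) list"

definition Omega :: "'b fvec" where
  "Omega = [(1, [])]"

fun kern_fold :: "('b::unital_star_algebra \<Rightarrow> 'b) \<Rightarrow> 'b \<Rightarrow> ('b \<times> 'b) list \<Rightarrow> 'b" where
  "kern_fold T x [] = x"
| "kern_fold T x ((u, v) # ps) = kern_fold T (adj v * T x * u) ps"

text \<open><u_1 .. u_n, v_1 .. v_k> = delta_{n=k} phi[v_n* (g+p)[ ... (g+p)[v_1* u_1] ... u_{n-1}] u_n]\<close>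
fun word_form :: "('b::unital_star_algebra \<Rightarrow> 'b) \<Rightarrow> ('b \<Rightarrow> complex) \<Rightarrow> 'b list \<Rightarrow> 'b list \<Rightarrow> complex" where
  "word_form \<gamma> \<phi> [] [] = 1"
| "word_form \<gamma> \<phi> (u # us) (v # vs) =
     (if length us = length vs
      then \<phi> (kern_fold (gp \<gamma> \<phi>) (adj v * u) (zip us vs)) else 0)"
| "word_form \<gamma> \<phi> _ _ = 0"

definition fock_form :: "('b::unital_star_algebra \<Rightarrow> 'b) \<Rightarrow> ('b \<Rightarrow> complex) \<Rightarrow> 'b fvec \<Rightarrow> 'b fvec \<Rightarrow> complex" where
  "fock_form \<gamma> \<phi> x y = (\<Sum>(c, w)\<leftarrow>x. \<Sum>(d, w')\<leftarrow>y. c * cnj d * word_form \<gamma> \<phi> w w')"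

definition lin_ext :: "('b list \<Rightarrow> 'b fvec) \<Rightarrow> 'b fvec \<Rightarrow> 'b fvec" where
  "lin_ext f x = concat (map (\<lambda>(c, w). map (\<lambda>(d, w'). (c * d, w')) (f w)) x)"

definition a_plus :: "'b \<Rightarrow> 'b fvec \<Rightarrow> 'b fvec" where
  "a_plus b = lin_ext (\<lambda>w. [(1, b # w)])"

fun a_minus_word :: "('b::unital_star_algebra \<Rightarrow> 'b) \<Rightarrow> ('b \<Rightarrow> complex) \<Rightarrow> 'b \<Rightarrow> 'b list \<Rightarrow> 'b fvec" where
  "a_minus_word \<gamma> \<phi> b [] = []"
| "a_minus_word \<gamma> \<phi> b [u] = [(\<phi> (b * u), [])]"
| "a_minus_word \<gamma> \<phi> b (u1 # u2 # us) = [(1, (gp \<gamma> \<phi> (b * u1) * u2) # us)]"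

definition a_minus :: "('b::unital_star_algebra \<Rightarrow> 'b) \<Rightarrow> ('b \<Rightarrow> complex) \<Rightarrow> 'b \<Rightarrow> 'b fvec \<Rightarrow> 'b fvec" where
  "a_minus \<gamma> \<phi> b = lin_ext (a_minus_word \<gamma> \<phi> b)"

fun a_zero_word :: "('b \<Rightarrow> 'b \<Rightarrow> 'b) \<Rightarrow> 'b \<Rightarrow> 'b list \<Rightarrow> 'b fvec" where
  "a_zero_word \<Lambda> b [] = []"
| "a_zero_word \<Lambda> b (u # us) = [(1, \<Lambda> b u # us)]"

definition a_zero :: "('b \<Rightarrow> 'b \<Rightarrow> 'b) \<Rightarrow> 'b \<Rightarrow> 'b fvec \<Rightarrow> 'b fvec" where
  "a_zero \<Lambda> b = lin_ext (a_zero_word \<Lambda> b)"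

text \<open>Sum of operators = concatenation of formal sums.\<close>
definition field_op :: "('b::unital_star_algebra \<Rightarrow> 'b) \<Rightarrow> ('b \<Rightarrow> complex) \<Rightarrow> ('b \<Rightarrow> 'b \<Rightarrow> 'b) \<Rightarrow> 'b \<Rightarrow> 'b fvec \<Rightarrow> 'b fvec" where
  "field_op \<gamma> \<phi> \<Lambda> b x = a_plus b x @ a_minus \<gamma> \<phi> b x @ a_zero \<Lambda> b x"

text \<open>Product Y_1 ... Y_n of operators (Y_n acts first).\<close>
definition op_prod :: "('v \<Rightarrow> 'v) list \<Rightarrow> 'v \<Rightarrow> 'v" where
  "op_prod Ys = foldr (\<circ>) Ys id"

definition vac_state :: "('b::unital_star_algebra \<Rightarrow> 'b) \<Rightarrow> ('b \<Rightarrow> complex) \<Rightarrow> ('b fvec \<Rightarrow> 'b fvec) \<Rightarrow> complex" where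
  "vac_state \<gamma> \<phi> A = fock_form \<gamma> \<phi> (A Omega) Omega"

definition NC :: "nat \<Rightarrow> nat set set set" where
  "NC n = {P. partition_on {0..<n} P \<and>
     (\<forall>V\<in>P. \<forall>W\<in>P. V \<noteq> W \<longrightarrow>
        \<not> (\<exists>a b c d. a < b \<and> b < c \<and> c < d \<and> a \<in> V \<and> c \<in> V \<and> b \<in> W \<and> d \<in> W))}"

text \<open>R (the list [Y_1..Y_k]) stands for R_k[Y_1,...,Y_k].  R is the family of free cumulants
  with respect to psi iff the moment-cumulant formula holds for all n >= 1 and all operators.\<close>
definition free_cumulants :: "(('v \<Rightarrow> 'v) \<Rightarrow> complex) \<Rightarrow> (('v \<Rightarrow> 'v) list \<Rightarrow> complex) \<Rightarrow> bool" where
  "free_cumulants \<psi> R \<longleftrightarrow>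
     (\<forall>Ys. Ys \<noteq> [] \<longrightarrow>
        \<psi> (op_prod Ys) =
          (\<Sum>P\<in>NC (length Ys). \<Prod>V\<in>P. R (map (\<lambda>i. Ys ! i) (sorted_list_of_set V))))"

end

theory Submission
  imports Defs
begin

(* For gamma = 0 the map (gamma + phi)[b] is phi[b] 1, so an annihilator simply multiplies by a
   scalar and the vacuum moments of the X(u_i) acting on a word w can be expanded along
   noncrossing partitions of the operator positions in which some blocks are left "open", one
   for each letter of w.  A closed block i_1 < ... < i_k is weighted by
   phi[u_(i_1) Lambda(u_(i_2), ... Lambda(u_(i_(k-1)), u_(i_k)))], i.e. by
   <a^-(u_(i_1)) a^0(u_(i_2)) ... a^+(u_(i_k)) Omega, Omega>, and singletons by 0; peeling off the
   last operator matches the three terms a^+, a^-, a^0 with three ways the last position can sit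
   in such a partition.  For w empty this is a moment-cumulant formula, and since the free
   cumulants are determined by the moments (induction on n: only the one-block partition
   involves R_n), they coincide with these block weights. *)

section \<open>Vacuum moments of the field operators\<close>

definition lin_eval :: "('b list \<Rightarrow> complex) \<Rightarrow> 'b fvec \<Rightarrow> complex" where
  "lin_eval g x = (\<Sum>(c, w)\<leftarrow>x. c * g w)"

lemma lin_eval_Nil [simp]: "lin_eval g [] = 0"
  by (simp add: lin_eval_def)

lemma lin_eval_Cons [simp]: "lin_eval g ((c, w) # x) = c * g w + lin_eval g x"
  by (simp add: lin_eval_def)

lemma lin_eval_append [simp]: "lin_eval g (x @ y) = lin_eval g x + lin_eval g y"
  by (simp add: lin_eval_def)

lemma lin_eval_add: "lin_eval (\<lambda>w. f w + g w) x = lin_eval f x + lin_eval g x"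
  by (induction x) (auto simp: algebra_simps)

lemma lin_eval_scale: "lin_eval g (map (\<lambda>(d, w). (c * d, w)) x) = c * lin_eval g x"
  by (induction x) (auto simp: algebra_simps)

lemma lin_eval_lin_ext: "lin_eval g (lin_ext f x) = lin_eval (\<lambda>w. lin_eval g (f w)) x"
  by (induction x) (auto simp: lin_ext_def lin_eval_scale)

lemma lin_eval_field_op:
  "lin_eval g (field_op \<gamma> \<phi> \<Lambda> u x) =
   lin_eval (\<lambda>w. g (u # w) + lin_eval g (a_minus_word \<gamma> \<phi> u w) + lin_eval g (a_zero_word \<Lambda> u w)) x"
  unfolding field_op_def a_plus_def a_minus_def a_zero_def
  by (simp add: lin_eval_lin_ext lin_eval_add)

lemma fock_form_Omega: "fock_form \<gamma> \<phi> x Omega = lin_eval (\<lambda>w. if w = [] then 1 else 0) x"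
proof (induction x)
  case Nil
  then show ?case by (simp add: fock_form_def)
next
  case (Cons p x)
  obtain c w where p: "p = (c, w)" by force
  have "word_form \<gamma> \<phi> w [] = (if w = [] then 1 else 0)" by (cases w) auto
  then show ?case using Cons by (simp add: fock_form_def Omega_def p)
qed

lemma op_prod_Nil [simp]: "op_prod [] = id"
  by (simp add: op_prod_def)

lemma op_prod_Cons [simp]: "op_prod (f # fs) = f \<circ> op_prod fs"
  by (simp add: op_prod_def)

lemma op_prod_append: "op_prod (xs @ ys) = op_prod xs \<circ> op_prod ys"
  by (induction xs) auto

lemma gp_zero_mult: "gp (\<lambda>_. 0) \<phi> b * y = scaleC (\<phi> b) y"
  by (simp add: gp_def scaleC_left_mult)

abbreviation free_field ::
    "('b::unital_star_algebra \<Rightarrow> complex) \<Rightarrow> ('b \<Rightarrow> 'b \<Rightarrow> 'b) \<Rightarrow> 'b \<Rightarrow> 'b fvec \<Rightarrow> 'b fvec"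
  where "free_field \<phi> \<Lambda> \<equiv> field_op (\<lambda>_. 0) \<phi> \<Lambda>"

definition word_moment ::
    "('b::unital_star_algebra \<Rightarrow> complex) \<Rightarrow> ('b \<Rightarrow> 'b \<Rightarrow> 'b) \<Rightarrow> 'b list \<Rightarrow> 'b list \<Rightarrow> complex" where
  "word_moment \<phi> \<Lambda> us w = fock_form (\<lambda>_. 0) \<phi> (op_prod (map (free_field \<phi> \<Lambda>) us) [(1, w)]) Omega"

lemma word_moment_Nil: "word_moment \<phi> \<Lambda> [] w = (if w = [] then 1 else 0)"
  by (simp add: word_moment_def fock_form_Omega)

lemma fock_form_field_ops_Omega:
  "fock_form (\<lambda>_. 0) \<phi> (op_prod (map (free_field \<phi> \<Lambda>) us) x) Omega = lin_eval (word_moment \<phi> \<Lambda> us) x"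
proof (induction us arbitrary: x rule: rev_induct)
  case Nil
  then show ?case by (simp add: fock_form_Omega word_moment_def)
next
  case (snoc u us)
  have "word_moment \<phi> \<Lambda> (us @ [u]) w = lin_eval (word_moment \<phi> \<Lambda> us) (free_field \<phi> \<Lambda> u [(1, w)])" for w
  proof -
    have "word_moment \<phi> \<Lambda> (us @ [u]) w =
        fock_form (\<lambda>_. 0) \<phi> (op_prod (map (free_field \<phi> \<Lambda>) us) (free_field \<phi> \<Lambda> u [(1, w)])) Omega"
      by (simp add: word_moment_def op_prod_append)
    then show ?thesis by (simp only: snoc)
  qed
  then show ?case
    using snoc[of "free_field \<phi> \<Lambda> u x"] by (simp add: op_prod_append lin_eval_field_op)
qed

lemma vac_state_field_ops: "vac_state (\<lambda>_. 0) \<phi> (op_prod (map (free_field \<phi> \<Lambda>) us)) = word_moment \<phi> \<Lambda> us []"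
  unfolding vac_state_def fock_form_field_ops_Omega by (simp add: Omega_def)

lemma word_moment_snoc:
  "word_moment \<phi> \<Lambda> (us @ [u]) w = word_moment \<phi> \<Lambda> us (u # w)
     + lin_eval (word_moment \<phi> \<Lambda> us) (a_minus_word (\<lambda>_. 0) \<phi> u w)
     + lin_eval (word_moment \<phi> \<Lambda> us) (a_zero_word \<Lambda> u w)"
  unfolding word_moment_def op_prod_append map_append
  by (simp add: fock_form_field_ops_Omega lin_eval_field_op)

lemma word_moment_scaleC:
  assumes "lin_functional \<phi>" and "bilin_map \<Lambda>"
  shows "word_moment \<phi> \<Lambda> us (ws @ scaleC c y # r) = c * word_moment \<phi> \<Lambda> us (ws @ y # r)"
proof (induction us arbitrary: ws y r c rule: rev_induct)
  case Nil
  then show ?case by (simp add: word_moment_Nil)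
next
  case (snoc u us)
  have \<phi>_scaleC: "\<phi> (scaleC c x) = c * \<phi> x" for c x
    using assms(1) by (simp add: lin_functional_def)
  have \<Lambda>_scaleC: "\<Lambda> b (scaleC c x) = scaleC c (\<Lambda> b x)" for b c x
    using assms(2) by (simp add: bilin_map_def lin_map_def)
  let ?M = "lin_eval (word_moment \<phi> \<Lambda> us)"
  have minus: "?M (a_minus_word (\<lambda>_. 0) \<phi> u (ws @ scaleC c y # r)) = c * ?M (a_minus_word (\<lambda>_. 0) \<phi> u (ws @ y # r))"
  proof (cases ws)
    case Nil
    then show ?thesis
      using snoc[of "[]" "\<phi> (u * y)" "hd r" "tl r"] snoc[of "[]" "\<phi> (u * scaleC c y)" "hd r" "tl r"]
      by (cases r) (simp_all add: gp_zero_mult scaleC_right_mult \<phi>_scaleC)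
  next
    case (Cons w1 ws')
    then show ?thesis
      using snoc[of "[]" c "scaleC (\<phi> (u * w1)) y" r] snoc[of "gp (\<lambda>_. 0) \<phi> (u * w1) * hd ws' # tl ws'" c y r]
      by (cases ws') (simp_all add: gp_zero_mult scaleC_scaleC mult.commute)
  qed
  have zero: "?M (a_zero_word \<Lambda> u (ws @ scaleC c y # r)) = c * ?M (a_zero_word \<Lambda> u (ws @ y # r))"
    using snoc[of "[]" c "\<Lambda> u y" r] snoc[of "\<Lambda> u (hd ws) # tl ws" c y r]
    by (cases ws) (simp_all add: \<Lambda>_scaleC)
  show ?case
    using snoc[of "u # ws" c y r] minus zero by (simp add: word_moment_snoc algebra_simps)
qed

lemma word_moment_snoc_Nil: "word_moment \<phi> \<Lambda> (us @ [u]) [] = word_moment \<phi> \<Lambda> us [u]"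
  by (simp add: word_moment_snoc)

lemma word_moment_snoc_Cons:
  assumes "lin_functional \<phi>" and "bilin_map \<Lambda>"
  shows "word_moment \<phi> \<Lambda> (us @ [u]) (x # r) =
    word_moment \<phi> \<Lambda> us (u # x # r) + \<phi> (u * x) * word_moment \<phi> \<Lambda> us r + word_moment \<phi> \<Lambda> us (\<Lambda> u x # r)"
proof (cases r)
  case Nil
  then show ?thesis by (simp add: word_moment_snoc)
next
  case (Cons y r')
  then show ?thesis
    using word_moment_scaleC[OF assms, of us "[]" "\<phi> (u * x)" y r']
    by (simp add: word_moment_snoc gp_zero_mult)
qed

section \<open>Noncrossing partitions: removing and adding the last point\<close>

lemma partition_on_block_eq:
  "partition_on A P \<Longrightarrow> V \<in> P \<Longrightarrow> W \<in> P \<Longrightarrow> x \<in> V \<Longrightarrow> x \<in> W \<Longrightarrow> V = W"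
  using disjointD[OF partition_onD2, of A P V W] by blast

lemma partition_on_block_subset: "partition_on A P \<Longrightarrow> V \<in> P \<Longrightarrow> V \<subseteq> A"
  unfolding partition_on_def by blast

lemma partition_on_block_nonempty: "partition_on A P \<Longrightarrow> V \<in> P \<Longrightarrow> V \<noteq> {}"
  unfolding partition_on_def by blast

lemma partition_on_covers: "partition_on A P \<Longrightarrow> x \<in> A \<Longrightarrow> \<exists>V\<in>P. x \<in> V"
  unfolding partition_on_def by blast

lemma partition_onI_eq:
  "\<Union>P = A \<Longrightarrow> (\<And>V W x. V \<in> P \<Longrightarrow> W \<in> P \<Longrightarrow> x \<in> V \<Longrightarrow> x \<in> W \<Longrightarrow> V = W) \<Longrightarrow> {} \<notin> P
   \<Longrightarrow> partition_on A P"
  by (rule partition_onI) (auto simp: disjnt_def)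

lemma partition_on_less: "partition_on {0..<(m::nat)} P \<Longrightarrow> V \<in> P \<Longrightarrow> x \<in> V \<Longrightarrow> x < m"
  using partition_on_block_subset by fastforce

lemma partition_on_bound_notin: "partition_on {0..<(m::nat)} P \<Longrightarrow> V \<in> P \<Longrightarrow> m \<notin> V"
  using partition_on_less by blast

definition noncrossing :: "nat set set \<Rightarrow> bool" where
  "noncrossing P \<longleftrightarrow> (\<forall>V\<in>P. \<forall>W\<in>P. V \<noteq> W \<longrightarrow>
     \<not> (\<exists>a b c d. a < b \<and> b < c \<and> c < d \<and> a \<in> V \<and> c \<in> V \<and> b \<in> W \<and> d \<in> W))"

lemma NC_iff: "P \<in> NC n \<longleftrightarrow> partition_on {0..<n} P \<and> noncrossing P"
  unfolding NC_def noncrossing_def by (rule mem_Collect_eq)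

lemma noncrossingD:
  "noncrossing P \<Longrightarrow> V \<in> P \<Longrightarrow> W \<in> P \<Longrightarrow> V \<noteq> W \<Longrightarrow> a < b \<Longrightarrow> b < c \<Longrightarrow> c < d
   \<Longrightarrow> a \<in> V \<Longrightarrow> c \<in> V \<Longrightarrow> b \<in> W \<Longrightarrow> d \<in> W \<Longrightarrow> False"
  unfolding noncrossing_def
  by (drule bspec, assumption, drule bspec, assumption, drule mp, assumption, erule notE, intro exI conjI)

lemma noncrossingI:
  "(\<And>V W a b c d. V \<in> P \<Longrightarrow> W \<in> P \<Longrightarrow> V \<noteq> W \<Longrightarrow> a < b \<Longrightarrow> b < c \<Longrightarrow> c < d
     \<Longrightarrow> a \<in> V \<Longrightarrow> c \<in> V \<Longrightarrow> b \<in> W \<Longrightarrow> d \<in> W \<Longrightarrow> False) \<Longrightarrow> noncrossing P"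
  unfolding noncrossing_def by (intro ballI impI notI, elim exE conjE) metis

definition block_of :: "nat \<Rightarrow> nat set set \<Rightarrow> nat set" where
  "block_of m P = \<Union>{V\<in>P. m \<in> V}"

definition remove_point :: "nat \<Rightarrow> nat set set \<Rightarrow> nat set set" where
  "remove_point m P = (\<lambda>V. V - {m}) ` P - {{}}"

definition extend_block :: "nat \<Rightarrow> nat set set \<Rightarrow> nat set \<Rightarrow> nat set set" where
  "extend_block m P C = insert (insert m C) (P - {C})"

lemma block_of_eq:
  assumes "partition_on A P" "V \<in> P" "m \<in> V"
  shows "block_of m P = V"
proof -
  have "{W\<in>P. m \<in> W} = {V}" using partition_on_block_eq[OF assms(1) assms(2) _ assms(3)] assms by blast
  then show ?thesis unfolding block_of_def by simp
qed

lemma block_of_in: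
  assumes "partition_on {0..<Suc m} P"
  shows "block_of m P \<in> P" "m \<in> block_of m P"
proof -
  obtain C where "C \<in> P" "m \<in> C" using partition_on_covers[OF assms, of m] by auto
  then show "block_of m P \<in> P" "m \<in> block_of m P" using block_of_eq[OF assms] by auto
qed

lemma partition_on_remove_point:
  assumes "partition_on {0..<Suc m} P"
  shows "partition_on {0..<m} (remove_point m P)"
proof (rule partition_onI_eq)
  show "\<Union> (remove_point m P) = {0..<m}"
  proof (rule set_eqI)
    fix x
    show "x \<in> \<Union> (remove_point m P) \<longleftrightarrow> x \<in> {0..<m}"
    proof
      assume "x \<in> \<Union> (remove_point m P)"
      then obtain V where "V \<in> P" "x \<in> V" "x \<noteq> m" unfolding remove_point_def by blast
      then show "x \<in> {0..<m}" using partition_on_less[OF assms] by fastforce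
    next
      assume "x \<in> {0..<m}"
      then obtain V where "V \<in> P" "x \<in> V" using partition_on_covers[OF assms, of x] by auto
      then have "V - {m} \<in> remove_point m P" "x \<in> V - {m}"
        using \<open>x \<in> {0..<m}\<close> unfolding remove_point_def by auto
      then show "x \<in> \<Union> (remove_point m P)" by blast
    qed
  qed
  show "V = W" if VW: "V \<in> remove_point m P" "W \<in> remove_point m P" "x \<in> V" "x \<in> W" for V W x
  proof -
    obtain V0 W0 where "V0 \<in> P" "V = V0 - {m}" "W0 \<in> P" "W = W0 - {m}"
      using VW(1,2) unfolding remove_point_def by blast
    then show ?thesis using partition_on_block_eq[OF assms \<open>V0 \<in> P\<close> \<open>W0 \<in> P\<close>, of x] VW(3,4) by simp
  qed
  show "{} \<notin> remove_point m P" unfolding remove_point_def by blast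
qed

lemma noncrossing_remove_point:
  assumes "noncrossing P"
  shows "noncrossing (remove_point m P)"
proof (rule noncrossingI)
  fix V W a b c d
  assume "V \<in> remove_point m P" "W \<in> remove_point m P" "V \<noteq> W"
    and abcd: "a < b" "b < c" "c < d" "a \<in> V" "c \<in> V" "b \<in> W" "d \<in> W"
  then obtain V0 W0 where V0: "V0 \<in> P" "V = V0 - {m}" and W0: "W0 \<in> P" "W = W0 - {m}"
    unfolding remove_point_def by blast
  have "V0 \<noteq> W0" using \<open>V \<noteq> W\<close> V0 W0 by blast
  moreover have "a \<in> V0" "c \<in> V0" "b \<in> W0" "d \<in> W0" using abcd V0 W0 by auto
  ultimately show False using noncrossingD[OF assms V0(1) W0(1) _ abcd(1-3)] by simp
qed

lemma partition_on_extend_block: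
  assumes P: "partition_on {0..<m} P" and C: "C \<in> P"
  shows "partition_on {0..<Suc m} (extend_block m P C)"
proof (rule partition_onI_eq)
  have "\<Union> (extend_block m P C) = insert m (\<Union>P)"
    using C unfolding extend_block_def by blast
  then show "\<Union> (extend_block m P C) = {0..<Suc m}"
    using partition_onD1[OF P] by (simp add: atLeastLessThanSuc)
  show "V = W" if VW: "V \<in> extend_block m P C" "W \<in> extend_block m P C" "x \<in> V" "x \<in> W" for V W x
  proof -
    have cases: "X = insert m C \<or> (X \<in> P \<and> X \<noteq> C \<and> m \<notin> X)" if "X \<in> extend_block m P C" for X
      using that partition_on_bound_notin[OF P] unfolding extend_block_def by blast
    have "x \<in> C" if "x \<in> insert m C" "X \<in> P" "m \<notin> X" "x \<in> X" for X
      using that by auto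
    then show ?thesis
      using cases[OF VW(1)] cases[OF VW(2)] VW(3,4) partition_on_block_eq[OF P _ _ _ VW(3)]
        partition_on_block_eq[OF P _ C] by metis
  qed
  show "{} \<notin> extend_block m P C"
    using partition_on_block_nonempty[OF P] unfolding extend_block_def by blast
qed

lemma partition_on_insert_singleton:
  assumes P: "partition_on {0..<m} P"
  shows "partition_on {0..<Suc m} (insert {m} P)"
proof (rule partition_onI_eq)
  have "\<Union>P = {0..<m}" using partition_onD1[OF P] by simp
  then show "\<Union> (insert {m} P) = {0..<Suc m}" by auto
  show "V = W" if VW: "V \<in> insert {m} P" "W \<in> insert {m} P" "x \<in> V" "x \<in> W" for V W x
  proof (cases "x = m")
    case True
    then show ?thesis using VW partition_on_bound_notin[OF P] by blast
  next
    case False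
    then have "V \<in> P" "W \<in> P" using VW by auto
    then show ?thesis using partition_on_block_eq[OF P _ _ VW(3,4)] by simp
  qed
  show "{} \<notin> insert {m} P" using partition_on_block_nonempty[OF P] by blast
qed

lemma noncrossing_insert_singleton:
  assumes "noncrossing P"
  shows "noncrossing (insert {m} P)"
proof (rule noncrossingI)
  fix V W a b c d
  assume "V \<in> insert {m} P" "W \<in> insert {m} P" "V \<noteq> W"
    and abcd: "a < b" "b < c" "c < d" "a \<in> V" "c \<in> V" "b \<in> W" "d \<in> W"
  moreover have "V \<noteq> {m}" "W \<noteq> {m}" using abcd by auto
  ultimately show False using noncrossingD[OF assms _ _ \<open>V \<noteq> W\<close> abcd(1-3)] by blast
qed

lemma noncrossing_extend_block:
  assumes NC: "noncrossing P" and P: "partition_on {0..<m} P" and C: "C \<in> P"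
    and C_unstraddled: "\<And>V a b c. V \<in> P \<Longrightarrow> V \<noteq> C \<Longrightarrow> a < b \<Longrightarrow> b < c
      \<Longrightarrow> a \<in> V \<Longrightarrow> c \<in> V \<Longrightarrow> b \<in> C \<Longrightarrow> False"
  shows "noncrossing (extend_block m P C)"
proof (rule noncrossingI)
  fix V W a b c d
  assume V: "V \<in> extend_block m P C" and W: "W \<in> extend_block m P C" and "V \<noteq> W"
    and abcd: "a < b" "b < c" "c < d" "a \<in> V" "c \<in> V" "b \<in> W" "d \<in> W"
  define V0 where "V0 = (if V = insert m C then C else V)"
  define W0 where "W0 = (if W = insert m C then C else W)"
  have V_cases: "V = insert m C \<or> (V \<in> P \<and> V \<noteq> C)" and W_cases: "W = insert m C \<or> (W \<in> P \<and> W \<noteq> C)"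
    using V W unfolding extend_block_def by blast+
  have V0: "V0 \<in> P" "\<And>x. x \<in> V \<Longrightarrow> x \<noteq> m \<Longrightarrow> x \<in> V0"
    and W0: "W0 \<in> P" "\<And>x. x \<in> W \<Longrightarrow> x \<noteq> m \<Longrightarrow> x \<in> W0"
    using V_cases W_cases C unfolding V0_def W0_def by auto
  have "V0 \<noteq> W0" using \<open>V \<noteq> W\<close> V_cases W_cases unfolding V0_def W0_def by auto
  have "d \<le> m"
    using W_cases abcd(7) partition_on_less[OF P, of W d] partition_on_less[OF P C, of d] by auto
  then have abc: "a \<noteq> m" "b \<noteq> m" "c \<noteq> m" using abcd(1-3) by auto
  show False
  proof (cases "d = m")
    case False
    then show False
      using noncrossingD[OF NC V0(1) W0(1) \<open>V0 \<noteq> W0\<close> abcd(1-3)] abcd(4-7) abc V0(2) W0(2) by blast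
  next
    case True
    then have "W0 = C" using W_cases abcd(7) partition_on_bound_notin[OF P] unfolding W0_def by auto
    then show False
      using C_unstraddled[OF V0(1) _ abcd(1,2)] abcd(4-6) abc V0(2) W0(2) \<open>V0 \<noteq> W0\<close> by blast
  qed
qed

lemma remove_point_extend_block:
  assumes P: "partition_on {0..<m} P" and C: "C \<in> P"
  shows "remove_point m (extend_block m P C) = P"
proof -
  have "(\<lambda>V. V - {m}) ` (P - {C}) = P - {C}"
    using partition_on_bound_notin[OF P] by (auto intro!: image_eqI)
  then have "(\<lambda>V. V - {m}) ` extend_block m P C = insert C (P - {C})"
    unfolding extend_block_def using partition_on_bound_notin[OF P C] by simp
  then show ?thesis
    unfolding remove_point_def using insert_Diff[OF C] partition_onD3[OF P] by simp
qed

lemma remove_point_insert_singleton: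
  assumes P: "partition_on {0..<m} P"
  shows "remove_point m (insert {m} P) = P"
proof -
  have "(\<lambda>V. V - {m}) ` P = P"
    using partition_on_bound_notin[OF P] by (auto intro!: image_eqI)
  then show ?thesis unfolding remove_point_def using partition_onD3[OF P] by simp
qed

lemma remove_point_eq:
  assumes P: "partition_on {0..<Suc m} P" and C: "C \<in> P" "m \<in> C"
  shows "remove_point m P = (if C = {m} then P - {C} else insert (C - {m}) (P - {C}))"
proof -
  have "m \<notin> V" if "V \<in> P" "V \<noteq> C" for V
    using that partition_on_block_eq[OF P that(1) C(1) _ C(2)] by blast
  then have "(\<lambda>V. V - {m}) ` (P - {C}) = P - {C}"
    by (auto intro!: image_eqI)
  moreover have "P = insert C (P - {C})" using insert_Diff[OF C(1)] by simp
  ultimately have "(\<lambda>V. V - {m}) ` P = insert (C - {m}) (P - {C})"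
    by (metis image_insert)
  then show ?thesis
    unfolding remove_point_def using partition_onD3[OF P] C(2) by auto
qed

lemma extend_block_remove_point:
  assumes P: "partition_on {0..<Suc m} P" and C: "C \<in> P" "m \<in> C" "C \<noteq> {m}"
  shows "extend_block m (remove_point m P) (C - {m}) = P"
proof -
  have "C - {m} \<notin> P - {C}"
  proof
    assume "C - {m} \<in> P - {C}"
    moreover obtain x where "x \<in> C - {m}" using C(2,3) by blast
    ultimately show False using partition_on_block_eq[OF P _ C(1), of "C - {m}" x] by blast
  qed
  then have "insert (C - {m}) (P - {C}) - {C - {m}} = P - {C}" by blast
  then show ?thesis
    unfolding extend_block_def remove_point_eq[OF P C(1,2)]
    using C(3) insert_Diff[OF C(2)] insert_Diff[OF C(1)] by simp
qed

lemma insert_singleton_remove_point: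
  assumes "partition_on {0..<Suc m} P" "{m} \<in> P"
  shows "insert {m} (remove_point m P) = P"
  using remove_point_eq[OF assms] assms(2) by auto

lemma block_of_extend_block:
  assumes "partition_on {0..<m} P" "C \<in> P"
  shows "block_of m (extend_block m P C) = insert m C"
  by (rule block_of_eq[OF partition_on_extend_block[OF assms]]) (auto simp: extend_block_def)

section \<open>Noncrossing partitions with open blocks\<close>

text \<open>The open blocks of an element of \<open>NC_open n k\<close> are to be thought of as continued to the
  right of \<open>n - 1\<close>, the \<open>i\<close>-th one ending at the \<open>i\<close>-th letter of a word of length \<open>k\<close>.
  Noncrossing then forces the open blocks to be linearly ordered, the first one having the
  largest elements, and forbids any other block to straddle a point of an open block.\<close>

definition descending_blocks :: "nat set list \<Rightarrow> bool" where
  "descending_blocks Bs = sorted_wrt (\<lambda>A B. \<forall>a\<in>A. \<forall>b\<in>B. b < a) Bs"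

definition unstraddled :: "nat set set \<Rightarrow> nat set list \<Rightarrow> bool" where
  "unstraddled P Bs \<longleftrightarrow> (\<forall>B\<in>set Bs. \<forall>C\<in>P. C \<notin> set Bs \<longrightarrow>
      (\<forall>c1 b c2. c1 < b \<longrightarrow> b < c2 \<longrightarrow> c1 \<in> C \<longrightarrow> c2 \<in> C \<longrightarrow> b \<notin> B))"

definition NC_open :: "nat \<Rightarrow> nat \<Rightarrow> (nat set set \<times> nat set list) set" where
  "NC_open n k = {(P, Bs). partition_on {0..<n} P \<and> noncrossing P \<and> length Bs = k \<and> distinct Bs
      \<and> set Bs \<subseteq> P \<and> descending_blocks Bs \<and> unstraddled P Bs}"

lemma descending_blocks_Cons:
  "descending_blocks (A # Bs) \<longleftrightarrow> (\<forall>B\<in>set Bs. \<forall>a\<in>A. \<forall>b\<in>B. b < a) \<and> descending_blocks Bs"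
  unfolding descending_blocks_def by simp

lemma unstraddledD:
  "unstraddled P Bs \<Longrightarrow> B \<in> set Bs \<Longrightarrow> C \<in> P \<Longrightarrow> C \<notin> set Bs \<Longrightarrow> c1 < b \<Longrightarrow> b < c2
   \<Longrightarrow> c1 \<in> C \<Longrightarrow> c2 \<in> C \<Longrightarrow> b \<in> B \<Longrightarrow> False"
  unfolding unstraddled_def by metis

lemma unstraddledI:
  "(\<And>B C c1 b c2. B \<in> set Bs \<Longrightarrow> C \<in> P \<Longrightarrow> C \<notin> set Bs \<Longrightarrow> c1 < b \<Longrightarrow> b < c2
     \<Longrightarrow> c1 \<in> C \<Longrightarrow> c2 \<in> C \<Longrightarrow> b \<in> B \<Longrightarrow> False) \<Longrightarrow> unstraddled P Bs"
  unfolding unstraddled_def by metis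

lemma NC_open_iff:
  "(P, Bs) \<in> NC_open n k \<longleftrightarrow> partition_on {0..<n} P \<and> noncrossing P \<and> length Bs = k \<and> distinct Bs
      \<and> set Bs \<subseteq> P \<and> descending_blocks Bs \<and> unstraddled P Bs"
  unfolding NC_open_def by simp

lemma NC_open_0: "NC_open 0 k = (if k = 0 then {({}, [])} else {})"
proof -
  have "(P, Bs) \<in> NC_open 0 k \<longleftrightarrow> P = {} \<and> Bs = [] \<and> k = 0" for P Bs
    unfolding NC_open_iff
    by (auto simp: partition_on_empty noncrossing_def descending_blocks_def unstraddled_def)
  then show ?thesis by auto
qed

lemma NC_open_no_open_blocks: "NC_open n 0 = (\<lambda>P. (P, [])) ` NC n"
proof -
  have "(P, Bs) \<in> NC_open n 0 \<longleftrightarrow> Bs = [] \<and> P \<in> NC n" for P Bs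
    unfolding NC_open_iff NC_iff by (auto simp: descending_blocks_def unstraddled_def)
  then show ?thesis by auto
qed

lemma finite_NC_open: "finite (NC_open n k)"
proof (rule finite_subset)
  show "NC_open n k \<subseteq> Pow (Pow {0..<n}) \<times> {Bs. set Bs \<subseteq> Pow {0..<n} \<and> length Bs = k}"
    using partition_on_block_subset by (fastforce simp: NC_open_def)
  show "finite (Pow (Pow {0..<n}) \<times> {Bs. set Bs \<subseteq> Pow {0..<n} \<and> length Bs = k})"
    by (intro finite_cartesian_product finite_lists_length_eq) auto
qed

lemma NC_open_blocks_bounded:
  assumes "(P, Bs) \<in> NC_open m k"
  shows "\<forall>B\<in>P. finite B \<and> (\<forall>c\<in>B. c < m)"
  using assms partition_on_less[of m P] finite_subset[of _ "{0..<m}"] partition_on_block_subset[of "{0..<m}" P]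
  unfolding NC_open_iff by blast

lemma NC_open_block_of_last_open:
  assumes "(P, Bs) \<in> NC_open (Suc m) k" "block_of m P \<in> set Bs"
  shows "Bs = block_of m P # tl Bs"
proof -
  have P: "partition_on {0..<Suc m} P" and "set Bs \<subseteq> P" and desc: "descending_blocks Bs"
    using assms(1) unfolding NC_open_iff by auto
  obtain B0 Bs' where Bs: "Bs = B0 # Bs'" using assms(2) by (cases Bs) auto
  have B0: "B0 \<in> P" using \<open>set Bs \<subseteq> P\<close> Bs by simp
  obtain y where y: "y \<in> B0" using partition_on_block_nonempty[OF P B0] by blast
  have "block_of m P = B0"
  proof (rule ccontr)
    assume "block_of m P \<noteq> B0"
    then have "m < y" using desc assms(2) block_of_in(2)[OF P] y unfolding Bs descending_blocks_Cons by auto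
    then show False using partition_on_less[OF P B0 y] by simp
  qed
  then show ?thesis using Bs by simp
qed

lemma NC_open_extend_head_noncrossing:
  assumes "(P, C # Bs) \<in> NC_open m (Suc k)"
  shows "partition_on {0..<Suc m} (extend_block m P C)" "noncrossing (extend_block m P C)"
proof -
  have P: "partition_on {0..<m} P" and NC: "noncrossing P" and "set (C # Bs) \<subseteq> P"
    and desc: "descending_blocks (C # Bs)" and unstr: "unstraddled P (C # Bs)"
    using assms unfolding NC_open_iff by auto
  then have C: "C \<in> P" by simp
  show "partition_on {0..<Suc m} (extend_block m P C)" by (rule partition_on_extend_block[OF P C])
  have False if "V \<in> P" "V \<noteq> C" "a < b" "b < c" "a \<in> V" "c \<in> V" "b \<in> C" for V a b c
  proof (cases "V \<in> set Bs")
    case True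
    then show False using desc that(4,6,7) unfolding descending_blocks_Cons by fastforce
  next
    case False
    then show False using unstraddledD[OF unstr _ that(1) _ that(3-7)] that(2) by simp
  qed
  then show "noncrossing (extend_block m P C)" by (rule noncrossing_extend_block[OF NC P C])
qed

lemma NC_open_close_head:
  assumes "(P, C # Bs) \<in> NC_open m (Suc k)"
  shows "(extend_block m P C, Bs) \<in> NC_open (Suc m) k"
proof -
  have P: "partition_on {0..<m} P" and "length (C # Bs) = Suc k" "distinct (C # Bs)"
    and sub: "set (C # Bs) \<subseteq> P" and desc: "descending_blocks (C # Bs)"
    and unstr: "unstraddled P (C # Bs)"
    using assms unfolding NC_open_iff by auto
  have "set Bs \<subseteq> extend_block m P C"
    using sub \<open>distinct (C # Bs)\<close> unfolding extend_block_def by auto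
  moreover have "unstraddled (extend_block m P C) Bs"
  proof (rule unstraddledI)
    fix B D c1 b c2
    assume B: "B \<in> set Bs" and D: "D \<in> extend_block m P C" "D \<notin> set Bs"
      and h: "c1 < b" "b < c2" "c1 \<in> D" "c2 \<in> D" "b \<in> B"
    show False
    proof (cases "D = insert m C")
      case True
      have "b < m" using partition_on_less[OF P _ h(5)] B sub by auto
      then have "c1 \<in> C" using h(1,3) True by auto
      then show False using desc B h(1,5) unfolding descending_blocks_Cons by fastforce
    next
      case False
      then have "D \<in> P" "D \<notin> set (C # Bs)" using D unfolding extend_block_def by auto
      then show False using unstraddledD[OF unstr _ _ _ h] B by simp
    qed
  qed
  ultimately show ?thesis
    using NC_open_extend_head_noncrossing[OF assms] \<open>length (C # Bs) = Suc k\<close> \<open>distinct (C # Bs)\<close> desc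
    unfolding NC_open_iff descending_blocks_Cons by simp
qed

lemma NC_open_reopen_descending:
  assumes "(P, Bs) \<in> NC_open (Suc m) k" "block_of m P \<notin> set Bs"
  shows "descending_blocks ((block_of m P - {m}) # Bs)"
  unfolding descending_blocks_Cons
proof (intro conjI ballI)
  have P: "partition_on {0..<Suc m} P" and sub: "set Bs \<subseteq> P" and unstr: "unstraddled P Bs"
    using assms(1) unfolding NC_open_iff by auto
  show "descending_blocks Bs" using assms(1) unfolding NC_open_iff by simp
  define C where "C = block_of m P"
  have C: "C \<in> P" "m \<in> C" "C \<notin> set Bs" using block_of_in[OF P] assms(2) unfolding C_def by auto
  fix B a b assume B: "B \<in> set Bs" and a: "a \<in> C - {m}" and b: "b \<in> B"
  have "B \<in> P" "B \<noteq> C" using B sub C(3) by auto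
  then have "a \<noteq> b" "b \<noteq> m"
    using partition_on_block_eq[OF P C(1) \<open>B \<in> P\<close>] partition_on_block_eq[OF P \<open>B \<in> P\<close> C(1) b] a b C(2)
    by auto
  then have "b < m" using partition_on_less[OF P \<open>B \<in> P\<close> b] by simp
  then have "\<not> a < b"
    using unstraddledD[OF unstr B C(1) C(3) _ _ _ C(2) b, of a] a by blast
  then show "b < a" using \<open>a \<noteq> b\<close> by simp
qed

lemma NC_open_reopen_unstraddled:
  assumes "(P, Bs) \<in> NC_open (Suc m) k" "block_of m P \<notin> set Bs" "block_of m P \<noteq> {m}"
  shows "unstraddled (remove_point m P) ((block_of m P - {m}) # Bs)"
proof (rule unstraddledI)
  have P: "partition_on {0..<Suc m} P" and NC: "noncrossing P" and unstr: "unstraddled P Bs"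
    using assms(1) unfolding NC_open_iff by auto
  define C where "C = block_of m P"
  have C: "C \<in> P" "m \<in> C" using block_of_in[OF P] unfolding C_def by auto
  have rem: "remove_point m P = insert (C - {m}) (P - {C})"
    using remove_point_eq[OF P C] assms(3) unfolding C_def by simp
  fix B D c1 b c2
  assume B: "B \<in> set ((C - {m}) # Bs)" and D: "D \<in> remove_point m P" "D \<notin> set ((C - {m}) # Bs)"
    and h: "c1 < b" "b < c2" "c1 \<in> D" "c2 \<in> D" "b \<in> B"
  have "D \<noteq> C - {m}" "D \<notin> set Bs" using D(2) by simp_all
  then have DP: "D \<in> P" "D \<noteq> C" "D \<notin> set Bs" using D(1) unfolding rem by simp_all
  show False
  proof (cases "B = C - {m}")
    case True
    have "c2 \<noteq> m" using partition_on_block_eq[OF P DP(1) C(1) h(4)] DP(2) C(2) by blast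
    then have "c2 < m" using partition_on_less[OF P DP(1) h(4)] by simp
    moreover have "b \<in> C" using h(5) True by simp
    ultimately show False using noncrossingD[OF NC DP(1) C(1) DP(2) h(1,2) _ h(3,4) _ C(2)] by simp
  next
    case False
    then have "B \<in> set Bs" using B by simp
    then show False using unstraddledD[OF unstr _ DP(1) DP(3) h] by simp
  qed
qed

lemma NC_open_reopen_last_block:
  assumes "(P, Bs) \<in> NC_open (Suc m) k" "block_of m P \<notin> set Bs" "block_of m P \<noteq> {m}"
  shows "(remove_point m P, (block_of m P - {m}) # Bs) \<in> NC_open m (Suc k)"
proof -
  have P: "partition_on {0..<Suc m} P" and NC: "noncrossing P" and "length Bs = k"
    and "distinct Bs" and sub: "set Bs \<subseteq> P"
    using assms(1) unfolding NC_open_iff by auto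
  define C where "C = block_of m P"
  have C: "C \<in> P" "m \<in> C" "C \<notin> set Bs" "C \<noteq> {m}"
    using block_of_in[OF P] assms(2,3) unfolding C_def by auto
  have Bs_P: "B \<in> P" "B \<noteq> C" if "B \<in> set Bs" for B
    using that sub C(3) by auto
  obtain x where x: "x \<in> C" "x \<noteq> m" using C(2,4) by blast
  have "C - {m} \<notin> set Bs"
  proof
    assume "C - {m} \<in> set Bs"
    then have "C - {m} = C" using partition_on_block_eq[OF P Bs_P(1) C(1), of "C - {m}" x] x by simp
    then show False using \<open>C - {m} \<in> set Bs\<close> C(3) by simp
  qed
  moreover have "set ((C - {m}) # Bs) \<subseteq> remove_point m P"
    using remove_point_eq[OF P C(1,2)] C(4) Bs_P by auto
  ultimately show ?thesis
    unfolding NC_open_iff C_def[symmetric]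
    using partition_on_remove_point[OF P] noncrossing_remove_point[OF NC] \<open>length Bs = k\<close> \<open>distinct Bs\<close>
      NC_open_reopen_descending[OF assms(1,2)] NC_open_reopen_unstraddled[OF assms]
    unfolding C_def by simp
qed

lemma NC_open_insert_singleton:
  assumes "(P, Bs) \<in> NC_open m k"
  shows "(insert {m} P, {m} # Bs) \<in> NC_open (Suc m) (Suc k)"
proof -
  have P: "partition_on {0..<m} P" and NC: "noncrossing P" and "length Bs = k"
    and "distinct Bs" and sub: "set Bs \<subseteq> P" and desc: "descending_blocks Bs"
    and unstr: "unstraddled P Bs"
    using assms unfolding NC_open_iff by auto
  have "{m} \<notin> set Bs" using partition_on_bound_notin[OF P] sub by blast
  moreover have "descending_blocks ({m} # Bs)"
    unfolding descending_blocks_Cons using desc partition_on_less[OF P] sub by auto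
  moreover have "unstraddled (insert {m} P) ({m} # Bs)"
  proof (rule unstraddledI)
    fix B D c1 b c2
    assume B: "B \<in> set ({m} # Bs)" and D: "D \<in> insert {m} P" "D \<notin> set ({m} # Bs)"
      and h: "c1 < b" "b < c2" "c1 \<in> D" "c2 \<in> D" "b \<in> B"
    have DP: "D \<in> P" "D \<notin> set Bs" using D by auto
    have "c2 < m" by (rule partition_on_less[OF P DP(1) h(4)])
    then show False using unstraddledD[OF unstr _ DP h] B h(2,5) by auto
  qed
  moreover have "set ({m} # Bs) \<subseteq> insert {m} P" using sub by auto
  ultimately show ?thesis
    unfolding NC_open_iff
    using partition_on_insert_singleton[OF P] noncrossing_insert_singleton[OF NC]
      \<open>length Bs = k\<close> \<open>distinct Bs\<close> by simp
qed

lemma NC_open_remove_singleton: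
  assumes "(P, {m} # Bs) \<in> NC_open (Suc m) (Suc k)"
  shows "(remove_point m P, Bs) \<in> NC_open m k"
proof -
  have P: "partition_on {0..<Suc m} P" and NC: "noncrossing P" and "length ({m} # Bs) = Suc k"
    and "distinct ({m} # Bs)" and sub: "set ({m} # Bs) \<subseteq> P" and desc: "descending_blocks ({m} # Bs)"
    and unstr: "unstraddled P ({m} # Bs)"
    using assms unfolding NC_open_iff by auto
  have rem: "remove_point m P = P - {{m}}" using remove_point_eq[OF P, of "{m}"] sub by simp
  have "unstraddled (remove_point m P) Bs"
  proof (rule unstraddledI)
    fix B D c1 b c2
    assume "B \<in> set Bs" "D \<in> remove_point m P" "D \<notin> set Bs"
      and h: "c1 < b" "b < c2" "c1 \<in> D" "c2 \<in> D" "b \<in> B"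
    then have "B \<in> set ({m} # Bs)" "D \<in> P" "D \<notin> set ({m} # Bs)" unfolding rem by simp_all
    then show False using unstraddledD[OF unstr _ _ _ h] by blast
  qed
  moreover have "set Bs \<subseteq> remove_point m P" using sub \<open>distinct ({m} # Bs)\<close> unfolding rem by auto
  ultimately show ?thesis
    unfolding NC_open_iff
    using partition_on_remove_point[OF P] noncrossing_remove_point[OF NC] \<open>length ({m} # Bs) = Suc k\<close>
      \<open>distinct ({m} # Bs)\<close> desc unfolding descending_blocks_Cons by simp
qed

lemma NC_open_extend_head:
  assumes "(P, C # Bs) \<in> NC_open m (Suc k)"
  shows "(extend_block m P C, insert m C # Bs) \<in> NC_open (Suc m) (Suc k)"
proof -
  have P: "partition_on {0..<m} P" and "length (C # Bs) = Suc k" "distinct (C # Bs)"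
    and sub: "set (C # Bs) \<subseteq> P" and desc: "descending_blocks (C # Bs)"
    and unstr: "unstraddled P (C # Bs)"
    using assms unfolding NC_open_iff by auto
  have "insert m C \<notin> set Bs" using partition_on_bound_notin[OF P] sub by auto
  moreover have "set (insert m C # Bs) \<subseteq> extend_block m P C"
    using sub \<open>distinct (C # Bs)\<close> unfolding extend_block_def by auto
  moreover have "descending_blocks (insert m C # Bs)"
    using desc partition_on_less[OF P] sub unfolding descending_blocks_Cons by auto
  moreover have "unstraddled (extend_block m P C) (insert m C # Bs)"
  proof (rule unstraddledI)
    fix B D c1 b c2
    assume B: "B \<in> set (insert m C # Bs)" and D: "D \<in> extend_block m P C" "D \<notin> set (insert m C # Bs)"
      and h: "c1 < b" "b < c2" "c1 \<in> D" "c2 \<in> D" "b \<in> B"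
    have DP: "D \<in> P" "D \<notin> set (C # Bs)" using D unfolding extend_block_def by auto
    have "c2 < m" by (rule partition_on_less[OF P DP(1) h(4)])
    then have "b \<in> C \<or> B \<in> set Bs" using B h(2,5) by auto
    then show False using unstraddledD[OF unstr _ DP h(1-4)] h(5) by auto
  qed
  ultimately show ?thesis
    using NC_open_extend_head_noncrossing[OF assms] \<open>length (C # Bs) = Suc k\<close> \<open>distinct (C # Bs)\<close>
    unfolding NC_open_iff by simp
qed

lemma NC_open_shrink_head:
  assumes "(P, B # Bs) \<in> NC_open (Suc m) (Suc k)" "m \<in> B" "B \<noteq> {m}"
  shows "(remove_point m P, (B - {m}) # Bs) \<in> NC_open m (Suc k)"
proof -
  have P: "partition_on {0..<Suc m} P" and NC: "noncrossing P" and "length (B # Bs) = Suc k"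
    and "distinct (B # Bs)" and sub: "set (B # Bs) \<subseteq> P" and desc: "descending_blocks (B # Bs)"
    and unstr: "unstraddled P (B # Bs)"
    using assms(1) unfolding NC_open_iff by auto
  have rem: "remove_point m P = insert (B - {m}) (P - {B})"
    using remove_point_eq[OF P _ assms(2)] sub assms(3) by simp
  obtain x where x: "x \<in> B" "x \<noteq> m" using assms(2,3) by blast
  have "B - {m} \<notin> set Bs"
    using partition_on_block_eq[OF P _ _ _ x(1), of "B - {m}"] x sub \<open>distinct (B # Bs)\<close> by auto
  moreover have "set ((B - {m}) # Bs) \<subseteq> remove_point m P"
    using rem sub \<open>distinct (B # Bs)\<close> by auto
  moreover have "descending_blocks ((B - {m}) # Bs)"
    using desc unfolding descending_blocks_Cons by auto
  moreover have "unstraddled (remove_point m P) ((B - {m}) # Bs)"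
  proof (rule unstraddledI)
    fix B1 D c1 b c2
    assume B1: "B1 \<in> set ((B - {m}) # Bs)" and D: "D \<in> remove_point m P" "D \<notin> set ((B - {m}) # Bs)"
      and h: "c1 < b" "b < c2" "c1 \<in> D" "c2 \<in> D" "b \<in> B1"
    have DP: "D \<in> P" "D \<notin> set (B # Bs)" using D unfolding rem by auto
    have "b \<in> B \<or> B1 \<in> set Bs" using B1 h(5) by auto
    then show False using unstraddledD[OF unstr _ DP h(1-4)] h(5) by auto
  qed
  ultimately show ?thesis
    unfolding NC_open_iff
    using partition_on_remove_point[OF P] noncrossing_remove_point[OF NC] \<open>length (B # Bs) = Suc k\<close>
      \<open>distinct (B # Bs)\<close> by simp
qed

section \<open>The moment formula\<close>

text \<open>\<open>kappa [z\<^sub>1, \<dots>, z\<^sub>k] = \<phi>(z\<^sub>1 \<Lambda>(z\<^sub>2, \<dots> \<Lambda>(z\<^sub>k\<^sub>-\<^sub>1, z\<^sub>k)))\<close> for \<open>k \<ge> 2\<close>, and \<open>0\<close> for shorter lists.\<close>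

definition open_kappa ::
    "('b::unital_star_algebra \<Rightarrow> complex) \<Rightarrow> ('b \<Rightarrow> 'b \<Rightarrow> 'b) \<Rightarrow> 'b list \<Rightarrow> 'b \<Rightarrow> complex" where
  "open_kappa \<phi> \<Lambda> vs x = (case vs of [] \<Rightarrow> 0 | v # vs' \<Rightarrow> \<phi> (v * foldr \<Lambda> vs' x))"

definition kappa ::
    "('b::unital_star_algebra \<Rightarrow> complex) \<Rightarrow> ('b \<Rightarrow> 'b \<Rightarrow> 'b) \<Rightarrow> 'b list \<Rightarrow> complex" where
  "kappa \<phi> \<Lambda> zs = (if zs = [] then 0 else open_kappa \<phi> \<Lambda> (butlast zs) (last zs))"

definition subword :: "'a list \<Rightarrow> nat set \<Rightarrow> 'a list" where
  "subword us C = map (\<lambda>i. us ! i) (sorted_list_of_set C)"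

definition closed_weight ::
    "('b::unital_star_algebra \<Rightarrow> complex) \<Rightarrow> ('b \<Rightarrow> 'b \<Rightarrow> 'b) \<Rightarrow> 'b list \<Rightarrow> nat set set \<Rightarrow> nat set list \<Rightarrow> complex" where
  "closed_weight \<phi> \<Lambda> us P Bs = (\<Prod>C\<in>P - set Bs. kappa \<phi> \<Lambda> (subword us C))"

definition open_weight ::
    "('b::unital_star_algebra \<Rightarrow> complex) \<Rightarrow> ('b \<Rightarrow> 'b \<Rightarrow> 'b) \<Rightarrow> 'b list \<Rightarrow> nat set list \<Rightarrow> 'b list \<Rightarrow> complex" where
  "open_weight \<phi> \<Lambda> us Bs w = prod_list (map (\<lambda>(B, x). open_kappa \<phi> \<Lambda> (subword us B) x) (zip Bs w))"

definition weight ::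
    "('b::unital_star_algebra \<Rightarrow> complex) \<Rightarrow> ('b \<Rightarrow> 'b \<Rightarrow> 'b) \<Rightarrow> 'b list \<Rightarrow> 'b list \<Rightarrow> nat set set \<times> nat set list \<Rightarrow> complex" where
  "weight \<phi> \<Lambda> us w a = closed_weight \<phi> \<Lambda> us (fst a) (snd a) * open_weight \<phi> \<Lambda> us (snd a) w"

lemma open_kappa_single: "open_kappa \<phi> \<Lambda> [u] x = \<phi> (u * x)"
  by (simp add: open_kappa_def)

lemma open_kappa_snoc: "vs \<noteq> [] \<Longrightarrow> open_kappa \<phi> \<Lambda> (vs @ [u]) x = open_kappa \<phi> \<Lambda> vs (\<Lambda> u x)"
  by (cases vs) (auto simp: open_kappa_def)

lemma kappa_snoc: "kappa \<phi> \<Lambda> (vs @ [u]) = open_kappa \<phi> \<Lambda> vs u"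
  by (simp add: kappa_def)

lemma kappa_single: "kappa \<phi> \<Lambda> [u] = 0"
  by (simp add: kappa_def open_kappa_def)

lemma length_subword: "finite C \<Longrightarrow> length (subword us C) = card C"
  by (simp add: subword_def)

lemma subword_nonempty: "finite C \<Longrightarrow> C \<noteq> {} \<Longrightarrow> subword us C \<noteq> []"
  by (simp add: subword_def)

lemma subword_all: "subword us {0..<length us} = us"
  by (simp add: subword_def map_nth)

lemma subword_map: "C \<subseteq> {0..<length us} \<Longrightarrow> map (\<lambda>i. map f us ! i) (sorted_list_of_set C) = map f (subword us C)"
  using finite_subset[of C "{0..<length us}"] by (auto simp: subword_def subset_iff)

lemma subword_snoc: "finite C \<Longrightarrow> \<forall>c\<in>C. c < length us \<Longrightarrow> subword (us @ [u]) C = subword us C"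
  by (auto simp: subword_def nth_append)

lemma subword_snoc_singleton: "subword (us @ [u]) {length us} = [u]"
  by (simp add: subword_def)

lemma subword_snoc_insert:
  assumes "finite C" "\<forall>c\<in>C. c < length us"
  shows "subword (us @ [u]) (insert (length us) C) = subword us C @ [u]"
proof -
  have "insort (length us) xs = xs @ [length us]" if "\<forall>x\<in>set xs. x < length us" for xs
    using that by (induction xs) auto
  then have "sorted_list_of_set (insert (length us) C) = sorted_list_of_set C @ [length us]"
    using sorted_list_of_set_insert[OF assms(1)] assms by auto
  then show ?thesis using assms by (auto simp: subword_def nth_append)
qed

lemma open_weight_Cons:
  "open_weight \<phi> \<Lambda> us (B # Bs) (x # w) = open_kappa \<phi> \<Lambda> (subword us B) x * open_weight \<phi> \<Lambda> us Bs w"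
  by (simp add: open_weight_def)

lemma open_weight_snoc:
  assumes "\<forall>B\<in>set Bs. finite B \<and> (\<forall>c\<in>B. c < length us)"
  shows "open_weight \<phi> \<Lambda> (us @ [u]) Bs w = open_weight \<phi> \<Lambda> us Bs w"
  unfolding open_weight_def
  by (rule arg_cong[where f = prod_list], rule map_cong[OF refl])
    (use assms in \<open>auto simp: subword_snoc dest: set_zip_leftD\<close>)

lemma prod_kappa_subword_snoc:
  assumes "\<forall>C\<in>Q. finite C \<and> (\<forall>c\<in>C. c < length us)"
  shows "(\<Prod>C\<in>Q. kappa \<phi> \<Lambda> (subword (us @ [u]) C)) = (\<Prod>C\<in>Q. kappa \<phi> \<Lambda> (subword us C))"
  using assms by (auto intro: prod.cong simp: subword_snoc)

lemma weight_close_head: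
  assumes a: "(P, C # Bs) \<in> NC_open m (Suc k)" and m: "length us = m"
  shows "weight \<phi> \<Lambda> (us @ [u]) w (extend_block m P C, Bs) = weight \<phi> \<Lambda> us (u # w) (P, C # Bs)"
proof -
  have P: "partition_on {0..<m} P" and sub: "set (C # Bs) \<subseteq> P" using a unfolding NC_open_iff by auto
  have C: "C \<in> P" using sub by simp
  have blocks: "\<forall>B\<in>P. finite B \<and> (\<forall>c\<in>B. c < length us)" using NC_open_blocks_bounded[OF a] m by simp
  have "finite P" using blocks finite_elements[OF _ P] by simp
  have "insert m C \<notin> set Bs" "insert m C \<notin> P" using partition_on_bound_notin[OF P] sub by auto
  then have "extend_block m P C - set Bs = insert (insert m C) (P - set (C # Bs))"
    and "insert m C \<notin> P - set (C # Bs)"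
    unfolding extend_block_def by auto
  then have "closed_weight \<phi> \<Lambda> (us @ [u]) (extend_block m P C) Bs
      = kappa \<phi> \<Lambda> (subword (us @ [u]) (insert m C)) * (\<Prod>V\<in>P - set (C # Bs). kappa \<phi> \<Lambda> (subword (us @ [u]) V))"
    unfolding closed_weight_def using \<open>finite P\<close> by simp
  also have "\<dots> = open_kappa \<phi> \<Lambda> (subword us C) u * closed_weight \<phi> \<Lambda> us P (C # Bs)"
  proof -
    have "(\<Prod>V\<in>P - set (C # Bs). kappa \<phi> \<Lambda> (subword (us @ [u]) V)) = closed_weight \<phi> \<Lambda> us P (C # Bs)"
      unfolding closed_weight_def by (rule prod_kappa_subword_snoc) (use blocks in blast)
    then show ?thesis using subword_snoc_insert[of C us u] blocks C m by (simp add: kappa_snoc)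
  qed
  finally have "closed_weight \<phi> \<Lambda> (us @ [u]) (extend_block m P C) Bs =
      open_kappa \<phi> \<Lambda> (subword us C) u * closed_weight \<phi> \<Lambda> us P (C # Bs)" .
  moreover have "open_weight \<phi> \<Lambda> (us @ [u]) Bs w = open_weight \<phi> \<Lambda> us Bs w"
    by (rule open_weight_snoc) (use blocks sub in auto)
  ultimately show ?thesis
    unfolding weight_def by (simp add: open_weight_Cons)
qed

lemma weight_insert_singleton:
  assumes a: "(P, Bs) \<in> NC_open m k" and m: "length us = m"
  shows "weight \<phi> \<Lambda> (us @ [u]) (x # r) (insert {m} P, {m} # Bs) = \<phi> (u * x) * weight \<phi> \<Lambda> us r (P, Bs)"
proof -
  have P: "partition_on {0..<m} P" and sub: "set Bs \<subseteq> P" using a unfolding NC_open_iff by auto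
  have blocks: "\<forall>B\<in>P. finite B \<and> (\<forall>c\<in>B. c < length us)" using NC_open_blocks_bounded[OF a] m by simp
  have closed: "insert {m} P - set ({m} # Bs) = P - set Bs" using partition_on_bound_notin[OF P] by auto
  have "closed_weight \<phi> \<Lambda> (us @ [u]) (insert {m} P) ({m} # Bs) = closed_weight \<phi> \<Lambda> us P Bs"
    unfolding closed_weight_def closed by (rule prod_kappa_subword_snoc) (use blocks in blast)
  moreover have "open_weight \<phi> \<Lambda> (us @ [u]) Bs r = open_weight \<phi> \<Lambda> us Bs r"
    by (rule open_weight_snoc) (use blocks sub in auto)
  ultimately show ?thesis
    unfolding weight_def using subword_snoc_singleton[of us u] m by (simp add: open_weight_Cons open_kappa_single)
qed

lemma weight_extend_head:
  assumes a: "(P, B # Bs) \<in> NC_open m (Suc k)" and m: "length us = m"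
  shows "weight \<phi> \<Lambda> (us @ [u]) (x # r) (extend_block m P B, insert m B # Bs) =
    weight \<phi> \<Lambda> us (\<Lambda> u x # r) (P, B # Bs)"
proof -
  have P: "partition_on {0..<m} P" and sub: "set (B # Bs) \<subseteq> P" using a unfolding NC_open_iff by auto
  have B: "B \<in> P" using sub by simp
  have blocks: "\<forall>B\<in>P. finite B \<and> (\<forall>c\<in>B. c < length us)" using NC_open_blocks_bounded[OF a] m by simp
  have closed: "extend_block m P B - set (insert m B # Bs) = P - set (B # Bs)"
    unfolding extend_block_def using partition_on_bound_notin[OF P] by auto
  have "closed_weight \<phi> \<Lambda> (us @ [u]) (extend_block m P B) (insert m B # Bs) = closed_weight \<phi> \<Lambda> us P (B # Bs)"
    unfolding closed_weight_def closed by (rule prod_kappa_subword_snoc) (use blocks in blast)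
  moreover have "open_weight \<phi> \<Lambda> (us @ [u]) Bs r = open_weight \<phi> \<Lambda> us Bs r"
    by (rule open_weight_snoc) (use blocks sub in auto)
  moreover have "subword (us @ [u]) (insert m B) = subword us B @ [u]"
    using subword_snoc_insert[of B us u] blocks B m by simp
  moreover have "subword us B \<noteq> []"
    using subword_nonempty[of B us] blocks B partition_on_block_nonempty[OF P B] by simp
  ultimately show ?thesis
    unfolding weight_def by (simp add: open_weight_Cons open_kappa_snoc)
qed

lemma weight_closed_singleton:
  assumes a: "(P, Bs) \<in> NC_open (Suc m) k" and "{m} \<in> P" "{m} \<notin> set Bs" and m: "length us = m"
  shows "weight \<phi> \<Lambda> (us @ [u]) w (P, Bs) = 0"
proof -
  have "finite P" using a finite_elements[of "{0..<Suc m}" P] unfolding NC_open_iff by simp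
  moreover have "kappa \<phi> \<Lambda> (subword (us @ [u]) {m}) = 0"
    using subword_snoc_singleton[of us u] m by (simp add: kappa_single)
  ultimately have "closed_weight \<phi> \<Lambda> (us @ [u]) P Bs = 0"
    unfolding closed_weight_def using assms(2,3) by (metis DiffI finite_Diff prod_zero_iff)
  then show ?thesis unfolding weight_def by simp
qed

lemma sum_split_pairs:
  assumes "finite A"
  shows "sum f A = sum f {(x, y) \<in> A. \<not> p x y \<and> \<not> q x y} + sum f {(x, y) \<in> A. \<not> p x y \<and> q x y}
    + sum f {(x, y) \<in> A. p x y \<and> q x y} + sum f {(x, y) \<in> A. p x y \<and> \<not> q x y}"
proof -
  have filter: "{(x, y) \<in> A. R x y} = {a \<in> A. R (fst a) (snd a)}" for R by auto
  have "sum f A = (\<Sum>a\<in>A. (if \<not> p (fst a) (snd a) \<and> \<not> q (fst a) (snd a) then f a else 0)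
      + (if \<not> p (fst a) (snd a) \<and> q (fst a) (snd a) then f a else 0)
      + (if p (fst a) (snd a) \<and> q (fst a) (snd a) then f a else 0)
      + (if p (fst a) (snd a) \<and> \<not> q (fst a) (snd a) then f a else 0))"
    by (rule sum.cong) auto
  then show ?thesis
    unfolding filter by (simp add: sum.distrib sum.inter_filter[OF assms])
qed

text \<open>The four classes of \<open>NC_open (Suc m) k\<close>, according to whether the block of the last point
  \<open>m\<close> is closed or open, and a singleton or not, correspond to the terms \<open>a\<^sup>+\<close>, none, \<open>a\<^sup>-\<close>
  and \<open>a\<^sup>0\<close> of the field operator.\<close>

lemma sum_NC_open_Suc:
  "sum f (NC_open (Suc m) k) =
      sum f {(P, Bs) \<in> NC_open (Suc m) k. block_of m P \<notin> set Bs \<and> block_of m P \<noteq> {m}}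
    + sum f {(P, Bs) \<in> NC_open (Suc m) k. block_of m P \<notin> set Bs \<and> block_of m P = {m}}
    + sum f {(P, Bs) \<in> NC_open (Suc m) k. block_of m P \<in> set Bs \<and> block_of m P = {m}}
    + sum f {(P, Bs) \<in> NC_open (Suc m) k. block_of m P \<in> set Bs \<and> block_of m P \<noteq> {m}}"
  by (rule sum_split_pairs[OF finite_NC_open])

lemma weight_sum_close_head:
  assumes m: "length us = m"
  shows "sum (weight \<phi> \<Lambda> us (u # w)) (NC_open m (Suc k)) =
    sum (weight \<phi> \<Lambda> (us @ [u]) w) {(P, Bs) \<in> NC_open (Suc m) k. block_of m P \<notin> set Bs \<and> block_of m P \<noteq> {m}}"
    (is "_ = sum _ ?T")
proof -
  define close where "close = (\<lambda>(P, Bs). (extend_block m P (hd Bs), tl Bs))"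
  define reopen where "reopen = (\<lambda>(P, Bs). (remove_point m P, (block_of m P - {m}) # Bs))"
  show ?thesis
  proof (rule sum.reindex_bij_witness[of _ reopen close])
    fix a assume "a \<in> NC_open m (Suc k)"
    then obtain P C Bs where a: "a = (P, C # Bs)" and PC: "(P, C # Bs) \<in> NC_open m (Suc k)"
      by (cases a) (auto simp: NC_open_iff length_Suc_conv)
    then have P: "partition_on {0..<m} P" and C: "C \<in> P" and "set Bs \<subseteq> P"
      unfolding NC_open_iff by auto
    then have "insert m C \<notin> set Bs" "insert m C \<noteq> {m}"
      using partition_on_bound_notin[OF P] partition_on_block_nonempty[OF P C] by auto
    show "reopen (close a) = a"
      using remove_point_extend_block[OF P C] block_of_extend_block[OF P C] partition_on_bound_notin[OF P C]
      by (simp add: a close_def reopen_def)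
    show "close a \<in> ?T"
      using NC_open_close_head[OF PC] block_of_extend_block[OF P C] \<open>insert m C \<notin> set Bs\<close> \<open>insert m C \<noteq> {m}\<close>
      by (simp add: a close_def)
    show "weight \<phi> \<Lambda> (us @ [u]) w (close a) = weight \<phi> \<Lambda> us (u # w) a"
      using weight_close_head[OF PC m] by (simp add: a close_def)
  next
    fix b assume "b \<in> ?T"
    then obtain P Bs where b: "b = (P, Bs)" and PBs: "(P, Bs) \<in> NC_open (Suc m) k"
      and last: "block_of m P \<notin> set Bs" "block_of m P \<noteq> {m}"
      by blast
    have P: "partition_on {0..<Suc m} P" using PBs unfolding NC_open_iff by simp
    show "close (reopen b) = b"
      using extend_block_remove_point[OF P block_of_in[OF P] last(2)] by (simp add: b close_def reopen_def)
    show "reopen b \<in> NC_open m (Suc k)"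
      using NC_open_reopen_last_block[OF PBs last] by (simp add: b reopen_def)
  qed
qed

lemma weight_sum_insert_singleton:
  assumes m: "length us = m"
  shows "\<phi> (u * x) * sum (weight \<phi> \<Lambda> us r) (NC_open m k) =
    sum (weight \<phi> \<Lambda> (us @ [u]) (x # r)) {(P, Bs) \<in> NC_open (Suc m) (Suc k). block_of m P \<in> set Bs \<and> block_of m P = {m}}"
    (is "_ = sum _ ?T")
proof -
  define open_singleton where "open_singleton = (\<lambda>(P, Bs). (insert {m} P, {m} # Bs))"
  define remove where "remove = (\<lambda>(P, Bs :: nat set list). (remove_point m P, tl Bs))"
  have "sum (\<lambda>a. \<phi> (u * x) * weight \<phi> \<Lambda> us r a) (NC_open m k) = sum (weight \<phi> \<Lambda> (us @ [u]) (x # r)) ?T"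
  proof (rule sum.reindex_bij_witness[of _ remove open_singleton])
    fix a assume "a \<in> NC_open m k"
    then obtain P Bs where a: "a = (P, Bs)" and PBs: "(P, Bs) \<in> NC_open m k" by (cases a) auto
    then have P: "partition_on {0..<m} P" unfolding NC_open_iff by simp
    have "block_of m (insert {m} P) = {m}"
      using block_of_eq[OF partition_on_insert_singleton[OF P]] by simp
    then show "open_singleton a \<in> ?T"
      using NC_open_insert_singleton[OF PBs] by (simp add: a open_singleton_def)
    show "remove (open_singleton a) = a"
      using remove_point_insert_singleton[OF P] by (simp add: a open_singleton_def remove_def)
    show "weight \<phi> \<Lambda> (us @ [u]) (x # r) (open_singleton a) = \<phi> (u * x) * weight \<phi> \<Lambda> us r a"
      using weight_insert_singleton[OF PBs m] by (simp add: a open_singleton_def)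
  next
    fix b assume "b \<in> ?T"
    then obtain P Bs where b: "b = (P, Bs)" and PBs: "(P, Bs) \<in> NC_open (Suc m) (Suc k)"
      and last: "block_of m P \<in> set Bs" "block_of m P = {m}"
      by blast
    have P: "partition_on {0..<Suc m} P" using PBs unfolding NC_open_iff by simp
    have Bs: "Bs = {m} # tl Bs" using NC_open_block_of_last_open[OF PBs last(1)] last(2) by simp
    show "open_singleton (remove b) = b"
      using insert_singleton_remove_point[OF P] block_of_in(1)[OF P] last(2) Bs
      by (simp add: b open_singleton_def remove_def)
    show "remove b \<in> NC_open m k"
      using NC_open_remove_singleton[of P m "tl Bs" k] PBs Bs by (simp add: b remove_def)
  qed
  then show ?thesis by (simp add: sum_distrib_left)
qed

lemma weight_sum_extend_head:
  assumes m: "length us = m"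
  shows "sum (weight \<phi> \<Lambda> us (\<Lambda> u x # r)) (NC_open m (Suc k)) =
    sum (weight \<phi> \<Lambda> (us @ [u]) (x # r)) {(P, Bs) \<in> NC_open (Suc m) (Suc k). block_of m P \<in> set Bs \<and> block_of m P \<noteq> {m}}"
    (is "_ = sum _ ?T")
proof -
  define extend where "extend = (\<lambda>(P, Bs). (extend_block m P (hd Bs), insert m (hd Bs) # tl Bs))"
  define shrink where "shrink = (\<lambda>(P, Bs). (remove_point m P, (hd Bs - {m}) # tl Bs))"
  show ?thesis
  proof (rule sum.reindex_bij_witness[of _ shrink extend])
    fix a assume "a \<in> NC_open m (Suc k)"
    then obtain P B Bs where a: "a = (P, B # Bs)" and PB: "(P, B # Bs) \<in> NC_open m (Suc k)"
      by (cases a) (auto simp: NC_open_iff length_Suc_conv)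
    then have P: "partition_on {0..<m} P" and B: "B \<in> P" unfolding NC_open_iff by auto
    have "insert m B \<noteq> {m}"
      using partition_on_bound_notin[OF P B] partition_on_block_nonempty[OF P B] by auto
    then show "extend a \<in> ?T"
      using NC_open_extend_head[OF PB] block_of_extend_block[OF P B] by (simp add: a extend_def)
    show "shrink (extend a) = a"
      using remove_point_extend_block[OF P B] partition_on_bound_notin[OF P B]
      by (simp add: a extend_def shrink_def)
    show "weight \<phi> \<Lambda> (us @ [u]) (x # r) (extend a) = weight \<phi> \<Lambda> us (\<Lambda> u x # r) a"
      using weight_extend_head[OF PB m] by (simp add: a extend_def)
  next
    fix b assume "b \<in> ?T"
    then obtain P Bs where b: "b = (P, Bs)" and PBs: "(P, Bs) \<in> NC_open (Suc m) (Suc k)"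
      and last: "block_of m P \<in> set Bs" "block_of m P \<noteq> {m}"
      by blast
    define B where "B = block_of m P"
    have P: "partition_on {0..<Suc m} P" using PBs unfolding NC_open_iff by simp
    obtain Bs' where Bs: "Bs = B # Bs'" using NC_open_block_of_last_open[OF PBs last(1)] unfolding B_def by blast
    have B: "B \<in> P" "m \<in> B" "B \<noteq> {m}" using block_of_in[OF P] last(2) unfolding B_def by auto
    show "extend (shrink b) = b"
      using extend_block_remove_point[OF P B] insert_Diff[OF B(2)] Bs
      by (simp add: b extend_def shrink_def)
    show "shrink b \<in> NC_open m (Suc k)"
      using NC_open_shrink_head[of P B Bs' m k] PBs Bs B by (simp add: b shrink_def)
  qed
qed

lemma weight_sum_closed_singleton:
  assumes m: "length us = m"
  shows "sum (weight \<phi> \<Lambda> (us @ [u]) w) {(P, Bs) \<in> NC_open (Suc m) k. block_of m P \<notin> set Bs \<and> block_of m P = {m}} = 0"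
proof (rule sum.neutral, clarify)
  fix P Bs
  assume PBs: "(P, Bs) \<in> NC_open (Suc m) k" and last: "block_of m P \<notin> set Bs" "block_of m P = {m}"
  have "{m} \<in> P" using block_of_in(1)[of m P] PBs last(2) unfolding NC_open_iff by simp
  then show "weight \<phi> \<Lambda> (us @ [u]) w (P, Bs) = 0"
    using weight_closed_singleton[OF PBs _ _ m] last by simp
qed

lemma weight_sum_snoc_Nil:
  assumes "length us = m"
  shows "sum (weight \<phi> \<Lambda> (us @ [u]) []) (NC_open (Suc m) 0) = sum (weight \<phi> \<Lambda> us [u]) (NC_open m 1)"
proof -
  have "sum f {(P, Bs) \<in> NC_open (Suc m) 0. block_of m P \<in> set Bs \<and> Q P} = 0" for f :: "_ \<Rightarrow> complex" and Q
    by (rule sum.neutral) (auto simp: NC_open_iff)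
  then show ?thesis
    using sum_NC_open_Suc[of "weight \<phi> \<Lambda> (us @ [u]) []" m 0]
      weight_sum_close_head[OF assms] weight_sum_closed_singleton[OF assms] by simp
qed

lemma weight_sum_snoc_Cons:
  assumes "length us = m"
  shows "sum (weight \<phi> \<Lambda> (us @ [u]) (x # r)) (NC_open (Suc m) (Suc (length r))) =
    sum (weight \<phi> \<Lambda> us (u # x # r)) (NC_open m (Suc (Suc (length r))))
    + \<phi> (u * x) * sum (weight \<phi> \<Lambda> us r) (NC_open m (length r))
    + sum (weight \<phi> \<Lambda> us (\<Lambda> u x # r)) (NC_open m (Suc (length r)))"
  using sum_NC_open_Suc[of "weight \<phi> \<Lambda> (us @ [u]) (x # r)" m "Suc (length r)"]
    weight_sum_close_head[OF assms] weight_sum_closed_singleton[OF assms]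
    weight_sum_insert_singleton[OF assms] weight_sum_extend_head[OF assms]
  by simp

lemma word_moment_eq_weight_sum:
  assumes "lin_functional \<phi>" and "bilin_map \<Lambda>"
  shows "word_moment \<phi> \<Lambda> us w = sum (weight \<phi> \<Lambda> us w) (NC_open (length us) (length w))"
proof (induction us arbitrary: w rule: rev_induct)
  case Nil
  show ?case by (simp add: word_moment_Nil NC_open_0 weight_def closed_weight_def open_weight_def)
next
  case (snoc u us)
  show ?case
  proof (cases w)
    case Nil
    then show ?thesis
      using weight_sum_snoc_Nil[of us "length us"] snoc[of "[u]"] by (simp add: word_moment_snoc_Nil)
  next
    case (Cons x r)
    then show ?thesis
      using weight_sum_snoc_Cons[of us "length us"] snoc[of "u # x # r"] snoc[of r] snoc[of "\<Lambda> u x # r"]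
      by (simp add: word_moment_snoc_Cons[OF assms])
  qed
qed

theorem vacuum_moment_formula:
  assumes "lin_functional \<phi>" and "bilin_map \<Lambda>"
  shows "vac_state (\<lambda>_. 0) \<phi> (op_prod (map (free_field \<phi> \<Lambda>) us)) =
    (\<Sum>P\<in>NC (length us). \<Prod>V\<in>P. kappa \<phi> \<Lambda> (subword us V))"
proof -
  have "vac_state (\<lambda>_. 0) \<phi> (op_prod (map (free_field \<phi> \<Lambda>) us)) =
      sum (weight \<phi> \<Lambda> us []) ((\<lambda>P. (P, [])) ` NC (length us))"
    using word_moment_eq_weight_sum[OF assms, of us "[]"]
    by (simp add: vac_state_field_ops NC_open_no_open_blocks)
  also have "\<dots> = sum (weight \<phi> \<Lambda> us [] \<circ> (\<lambda>P. (P, []))) (NC (length us))"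
    by (rule sum.reindex) (auto simp: inj_on_def)
  finally show ?thesis by (simp add: weight_def closed_weight_def open_weight_def)
qed

section \<open>Free cumulants are determined by the moments\<close>

lemma finite_NC: "finite (NC n)"
  by (rule finite_subset[of _ "Pow (Pow {0..<n})"]) (use partition_on_block_subset in \<open>fastforce simp: NC_iff\<close>)+

lemma NC_one_block: "n > 0 \<Longrightarrow> {{0..<n}} \<in> NC n"
  by (auto simp: NC_iff noncrossing_def partition_on_space)

lemma NC_card_block_less:
  assumes "P \<in> NC n" "P \<noteq> {{0..<n}}" "V \<in> P"
  shows "card V < n"
proof -
  have P: "partition_on {0..<n} P" using assms(1) unfolding NC_iff by simp
  have "V \<noteq> {0..<n}"
  proof
    assume V: "V = {0..<n}"
    have "W = V" if W: "W \<in> P" for W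
    proof -
      obtain y where "y \<in> W" using partition_on_block_nonempty[OF P W] by blast
      moreover have "y \<in> V" using partition_on_block_subset[OF P W] \<open>y \<in> W\<close> V by blast
      ultimately show ?thesis using partition_on_block_eq[OF P W assms(3)] by blast
    qed
    then show False using assms(2,3) V by blast
  qed
  then show ?thesis
    using partition_on_block_subset[OF P assms(3)] psubset_card_mono[of "{0..<n}" V] by auto
qed

lemma free_cumulants_unique:
  fixes X :: "'a \<Rightarrow> 'v \<Rightarrow> 'v" and K :: "'a list \<Rightarrow> complex"
  assumes R: "free_cumulants \<psi> R"
    and moments: "\<And>us. us \<noteq> [] \<Longrightarrow> \<psi> (op_prod (map X us)) = (\<Sum>P\<in>NC (length us). \<Prod>V\<in>P. K (subword us V))"
  shows "us \<noteq> [] \<Longrightarrow> R (map X us) = K us"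
proof (induction "length us" arbitrary: us rule: less_induct)
  case less
  define n where "n = length us"
  define P1 where "P1 = {{0..<n}}"
  have P1: "P1 \<in> NC n" unfolding P1_def using less.prems n_def by (simp add: NC_one_block)
  have R_block: "R (map (\<lambda>i. map X us ! i) (sorted_list_of_set V)) = K (subword us V)"
    if "P \<in> NC n - {P1}" "V \<in> P" for P V
  proof -
    have part: "partition_on {0..<n} P" using that(1) NC_iff by blast
    have "P \<noteq> {{0..<n}}" using that(1) unfolding P1_def by simp
    then have V: "V \<subseteq> {0..<length us}" "finite V" "V \<noteq> {}" "card V < n"
      using partition_on_block_subset[OF part that(2)] partition_on_block_nonempty[OF part that(2)]
        NC_card_block_less[OF _ _ that(2)] that(1) finite_subset[of V "{0..<n}"]
      unfolding n_def by auto
    then have "R (map X (subword us V)) = K (subword us V)"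
      using less.hyps length_subword[of V us] subword_nonempty[of V us] unfolding n_def by simp
    then show ?thesis unfolding subword_map[OF V(1)] .
  qed
  have "(\<Sum>P\<in>NC n. \<Prod>V\<in>P. R (map (\<lambda>i. map X us ! i) (sorted_list_of_set V)))
      = (\<Prod>V\<in>P1. R (map (\<lambda>i. map X us ! i) (sorted_list_of_set V)))
        + (\<Sum>P\<in>NC n - {P1}. \<Prod>V\<in>P. R (map (\<lambda>i. map X us ! i) (sorted_list_of_set V)))"
    by (rule sum.remove[OF finite_NC P1])
  also have "(\<Prod>V\<in>P1. R (map (\<lambda>i. map X us ! i) (sorted_list_of_set V))) = R (map X us)"
    using subword_map[of "{0..<length us}" us X] subword_all[of us] unfolding P1_def n_def by simp
  also have "(\<Sum>P\<in>NC n - {P1}. \<Prod>V\<in>P. R (map (\<lambda>i. map X us ! i) (sorted_list_of_set V)))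
      = (\<Sum>P\<in>NC n - {P1}. \<Prod>V\<in>P. K (subword us V))"
    by (rule sum.cong[OF refl], rule prod.cong[OF refl], erule (1) R_block)
  finally have "(\<Sum>P\<in>NC n. \<Prod>V\<in>P. R (map (\<lambda>i. map X us ! i) (sorted_list_of_set V)))
      = R (map X us) + (\<Sum>P\<in>NC n - {P1}. \<Prod>V\<in>P. K (subword us V))" .
  moreover have "(\<Sum>P\<in>NC n. \<Prod>V\<in>P. K (subword us V)) = K us + (\<Sum>P\<in>NC n - {P1}. \<Prod>V\<in>P. K (subword us V))"
    using sum.remove[OF finite_NC P1, of "\<lambda>P. \<Prod>V\<in>P. K (subword us V)"] subword_all[of us]
    unfolding P1_def n_def by simp
  ultimately show ?case
    using R moments[OF less.prems] less.prems unfolding free_cumulants_def n_def by auto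
qed

section \<open>The cumulants of the free field\<close>

lemma op_prod_a_zero: "op_prod (map (a_zero \<Lambda>) us) [(1, [y])] = [(1, [foldr \<Lambda> us y])]"
  by (induction us) (auto simp: a_zero_def lin_ext_def)

lemma vac_state_a_minus_a_zero_a_plus:
  "vac_state (\<lambda>_. 0) \<phi> (op_prod ([a_minus (\<lambda>_. 0) \<phi> u1] @ map (a_zero \<Lambda>) us @ [a_plus un])) =
    \<phi> (u1 * foldr \<Lambda> us un)"
proof -
  have "a_plus un Omega = [(1, [un])]" by (simp add: a_plus_def lin_ext_def Omega_def)
  then have "op_prod ([a_minus (\<lambda>_. 0) \<phi> u1] @ map (a_zero \<Lambda>) us @ [a_plus un]) Omega =
      [(\<phi> (u1 * foldr \<Lambda> us un), [])]"
    by (simp add: op_prod_append op_prod_a_zero a_minus_def lin_ext_def)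
  then show ?thesis unfolding vac_state_def fock_form_Omega by simp
qed

theorem corollary3p8:
  fixes \<phi> :: "'b::unital_star_algebra \<Rightarrow> complex"
    and \<gamma> :: "'b \<Rightarrow> 'b"
    and \<Lambda> :: "'b \<Rightarrow> 'b \<Rightarrow> 'b"
    and R :: "('b fvec \<Rightarrow> 'b fvec) list \<Rightarrow> complex"
    and u1 un :: 'b and us :: "'b list"
  assumes "star_lin_functional \<phi>"
    and "star_lin_map \<gamma>"
    and "star_bilin_map \<Lambda>"
    and "positive_functional \<phi>"
    and "faithful_functional \<phi>"
    and "completely_positive (gp \<gamma> \<phi>)"
    and "\<forall>b u v. \<phi> (adj v * \<Lambda> b u) = \<phi> (adj (\<Lambda> (adj b) v) * u)"
    and "\<forall>b u v. \<gamma> (adj v * \<Lambda> b u) = \<gamma> (adj (\<Lambda> (adj b) v) * u)"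
    and "\<gamma> = (\<lambda>_. 0)"
    and "free_cumulants (vac_state \<gamma> \<phi>) R"
  shows "R (map (field_op \<gamma> \<phi> \<Lambda>) (u1 # us @ [un])) =
         vac_state \<gamma> \<phi> (op_prod ([a_minus \<gamma> \<phi> u1] @ map (a_zero \<Lambda>) us @ [a_plus un]))"
proof -
  have lin: "lin_functional \<phi>" "bilin_map \<Lambda>"
    using assms(1,3) unfolding star_lin_functional_def star_bilin_map_def by simp_all
  have "R (map (free_field \<phi> \<Lambda>) (u1 # us @ [un])) = kappa \<phi> \<Lambda> (u1 # us @ [un])"
    by (rule free_cumulants_unique[OF assms(10)[unfolded assms(9)] vacuum_moment_formula[OF lin]]) simp
  also have "\<dots> = \<phi> (u1 * foldr \<Lambda> us un)"
    by (simp add: kappa_def open_kappa_def butlast_append)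
  finally show ?thesis
    unfolding assms(9) vac_state_a_minus_a_zero_a_plus .
qed

end
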